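(* Let $r\ge 1$ be an integer and $k=4r$. Let $G_r$ be the following $k$-terminal digraph: start from the undirected $(r+2)\times(r+2)$ grid graph (vertices $(i,j)$, $1\le i,j\le r+2$, row $i$ counted from top, column $j$ from left, adjacent iff $|i-i'|+|j-j'|=1$); delete the four corner vertices; declare the remaining $4r$ boundary vertices to be the terminals (so there are $r$ terminals on each side) and all $r^2$ interior vertices non-terminals; delete every edge joining two terminals; finally orient every horizontal edge from left to right and every vertical edge from top to bottom. Then $G_r$ is acyclic and every reachability-preserving minor of $G_r$ contains at least $r^2=(k/4)^2$ non-terminal vertices. In particular, for infinitely many $k$ there is a $k$-terminal acyclic directed grid for which every reachability-preserving minor has $\Omega(k^2)$ non-terminals.
   Context: A minor of a digraph $G$ is any digraph obtained from $G$ by a sequence of vertex deletions, edge deletions and edge contractions (contracting a directed edge $(u,v)$ identifies $u$ and $v$ into one vertex, discarding loops), where terminals are never deleted and no contraction identifies two terminals. A digraph $H$ containing the terminal set $K$ is a reachability-preserving minor of $G$ if $H$ is a minor of $G$ and for all $x,x'\in K$ there is a directed path from $x$ to $x'$ in $H$ if and only if there is one in $G$. *)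

theory Defs
  imports Main
begin

text \<open>Contraction identifies u and v: one endpoint w (a non-terminal) is renamed
  to the other endpoint z; the merged vertex keeps the name z; loops are discarded.\<close>

type_synonym 'a digraph = "'a set \<times> ('a \<times> 'a) set"

definition rename :: "'a \<Rightarrow> 'a \<Rightarrow> 'a \<Rightarrow> 'a" where
  "rename w z x = (if x = w then z else x)"

inductive minor_step :: "'a set \<Rightarrow> 'a digraph \<Rightarrow> 'a digraph \<Rightarrow> bool" for K where
  del_vertex: "x \<in> V \<Longrightarrow> x \<notin> K \<Longrightarrow>
     minor_step K (V, E) (V - {x}, {(a, b) \<in> E. a \<noteq> x \<and> b \<noteq> x})"
| del_edge: "e \<in> E \<Longrightarrow> minor_step K (V, E) (V, E - {e})"
| contract: "(u, v) \<in> E \<Longrightarrow> u \<noteq> v \<Longrightarrow> \<not> (u \<in> K \<and> v \<in> K) \<Longrightarrow>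
     {w, z} = {u, v} \<Longrightarrow> w \<noteq> z \<Longrightarrow> w \<notin> K \<Longrightarrow>
     minor_step K (V, E)
       (V - {w}, {(rename w z a, rename w z b) | a b. (a, b) \<in> E \<and> rename w z a \<noteq> rename w z b})"

definition is_minor :: "'a set \<Rightarrow> 'a digraph \<Rightarrow> 'a digraph \<Rightarrow> bool" where
  "is_minor K G H = (minor_step K)\<^sup>*\<^sup>* G H"

definition reach_pres_minor :: "'a set \<Rightarrow> 'a digraph \<Rightarrow> 'a digraph \<Rightarrow> bool" where
  "reach_pres_minor K G H \<longleftrightarrow> is_minor K G H \<and>
     (\<forall>x\<in>K. \<forall>x'\<in>K. (x, x') \<in> (snd H)\<^sup>* \<longleftrightarrow> (x, x') \<in> (snd G)\<^sup>*)"

definition grid_V :: "nat \<Rightarrow> (nat \<times> nat) set" where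
  "grid_V r = {(i, j). 1 \<le> i \<and> i \<le> r + 2 \<and> 1 \<le> j \<and> j \<le> r + 2
      \<and> (i, j) \<notin> {(1, 1), (1, r + 2), (r + 2, 1), (r + 2, r + 2)}}"

definition grid_K :: "nat \<Rightarrow> (nat \<times> nat) set" where
  "grid_K r = {(i, j) \<in> grid_V r. i = 1 \<or> i = r + 2 \<or> j = 1 \<or> j = r + 2}"

definition grid_E :: "nat \<Rightarrow> ((nat \<times> nat) \<times> (nat \<times> nat)) set" where
  "grid_E r = {(p, q). p \<in> grid_V r \<and> q \<in> grid_V r \<and> \<not> (p \<in> grid_K r \<and> q \<in> grid_K r) \<and>
      ((fst q = fst p \<and> snd q = snd p + 1) \<or> (snd q = snd p \<and> fst q = fst p + 1))}"

definition grid :: "nat \<Rightarrow> (nat \<times> nat) digraph" where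
  "grid r = (grid_V r, grid_E r)"

end

theory Submission
  imports Defs
begin

text \<open>Every minor of \<open>G\<^sub>r\<close> is described by a map \<open>f\<close> from a set \<open>D\<close> of grid vertices into its
  vertex set whose fibres (branch sets) are connected in the undirected grid, which fixes the
  terminals and under which every edge of the minor comes from a grid edge.  A path of the minor
  between two terminals therefore lifts to a grid walk between them through the branch sets of
  vertices on such paths.  For interior indices \<open>i, j\<close> the lift of a path from the top to the
  bottom terminal of column \<open>j\<close> and the lift of a path from the left to the right terminal of
  row \<open>i\<close> must meet, by a discrete Jordan curve argument (a parity count of crossings); so some
  vertex \<open>v(i, j)\<close> of the minor lies between both pairs of terminals.  Reachability preservation
  and the monotonicity of the grid then force \<open>v(i, j)\<close> to be a non-terminal and the map
  \<open>(i, j) \<mapsto> v(i, j)\<close> to be injective.\<close>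

definition grid_adj :: "nat \<times> nat \<Rightarrow> nat \<times> nat \<Rightarrow> bool" where
  "grid_adj x y \<longleftrightarrow> (fst x = fst y \<and> (snd y = snd x + 1 \<or> snd x = snd y + 1)) \<or>
                     (snd x = snd y \<and> (fst y = fst x + 1 \<or> fst x = fst y + 1))"

lemma symp_grid_adj: "symp grid_adj"
  unfolding symp_def grid_adj_def by auto

lemma grid_adj_cases:
  assumes "grid_adj u v"
  obtains a b where "u = (a, b)" "v = (a, b + 1)" | a b where "v = (a, b)" "u = (a, b + 1)"
    | a b where "u = (a, b)" "v = (a + 1, b)" | a b where "v = (a, b)" "u = (a + 1, b)"
  using assms unfolding grid_adj_def by (cases u; cases v) auto

fun count_steps :: "('a \<Rightarrow> 'a \<Rightarrow> bool) \<Rightarrow> 'a list \<Rightarrow> nat" where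
  "count_steps P (x # y # ys) = (if P x y then 1 else 0) + count_steps P (y # ys)"
| "count_steps P _ = 0"

lemma even_count_steps_changes:
  fixes Q :: "'a \<Rightarrow> bool"
  shows "xs \<noteq> [] \<Longrightarrow> even (count_steps (\<lambda>u v. Q u \<noteq> Q v) xs) \<longleftrightarrow> Q (hd xs) = Q (last xs)"
  by (induction xs rule: induct_list012) auto

lemma count_steps_cong:
  "successively A xs \<Longrightarrow> (\<And>u v. u \<in> set xs \<Longrightarrow> v \<in> set xs \<Longrightarrow> A u v \<Longrightarrow> P u v \<longleftrightarrow> P' u v)
    \<Longrightarrow> count_steps P xs = count_steps P' xs"
  by (induction xs rule: induct_list012) auto

lemma count_steps_eq_0:
  "successively A xs \<Longrightarrow> (\<And>u v. u \<in> set xs \<Longrightarrow> v \<in> set xs \<Longrightarrow> A u v \<Longrightarrow> \<not> P u v)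
    \<Longrightarrow> count_steps P xs = 0"
  by (induction xs rule: induct_list012) auto

lemma count_steps_exclusive_disj:
  "successively A xs \<Longrightarrow> (\<And>u v. u \<in> set xs \<Longrightarrow> v \<in> set xs \<Longrightarrow> A u v \<Longrightarrow>
      (R u v \<longleftrightarrow> P u v \<or> Q u v) \<and> \<not> (P u v \<and> Q u v))
    \<Longrightarrow> count_steps R xs = count_steps P xs + count_steps Q xs"
  by (induction xs rule: induct_list012) auto

text \<open>A step from \<open>u\<close> to \<open>v\<close> crosses the horizontal line between rows \<open>a\<close> and \<open>a + 1\<close>
  strictly to the left of column \<open>b\<close>, i.e.\ the leftward ray starting just below \<open>(a, b)\<close>.  The parity of the number of such crossings of a walk \<open>W\<close>
  plays the role of a winding number: it does not change between grid neighbours off \<open>W\<close>.\<close>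

definition crosses_left_of :: "nat \<Rightarrow> nat \<Rightarrow> nat \<times> nat \<Rightarrow> nat \<times> nat \<Rightarrow> bool" where
  "crosses_left_of a b u v \<longleftrightarrow> snd u < b \<and> snd v < b \<and> (fst u \<le> a) \<noteq> (fst v \<le> a)"

lemma count_crossings_Suc_col:
  assumes "successively grid_adj W" "(a, b) \<notin> set W"
  shows "count_steps (crosses_left_of a b) W = count_steps (crosses_left_of a (b + 1)) W"
proof (rule count_steps_cong[OF assms(1)])
  fix u v assume "u \<in> set W" "v \<in> set W" "grid_adj u v"
  with assms(2) have "grid_adj u v" "u \<noteq> (a, b)" "v \<noteq> (a, b)" by auto
  then show "crosses_left_of a b u v \<longleftrightarrow> crosses_left_of a (b + 1) u v"
    by (cases rule: grid_adj_cases) (auto simp: crosses_left_of_def)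
qed

text \<open>The crossings of the two rays differ exactly by the steps of \<open>W\<close> entering or leaving
  the segment of row \<open>a + 1\<close> left of column \<open>b\<close>, and there is an even number of those.\<close>

lemma even_count_crossings_Suc_row:
  assumes "successively grid_adj W" "W \<noteq> []" "(a + 1, b) \<notin> set W"
    and "\<not> (fst (hd W) = a + 1 \<and> snd (hd W) < b)" "\<not> (fst (last W) = a + 1 \<and> snd (last W) < b)"
  shows "even (count_steps (crosses_left_of a b) W) \<longleftrightarrow> even (count_steps (crosses_left_of (a + 1) b) W)"
proof -
  let ?Q = "\<lambda>z. fst z = a + 1 \<and> snd z < b"
  have "count_steps (\<lambda>u v. ?Q u \<noteq> ?Q v) W =
      count_steps (crosses_left_of a b) W + count_steps (crosses_left_of (a + 1) b) W"
  proof (rule count_steps_exclusive_disj[OF assms(1)])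
    fix u v assume "u \<in> set W" "v \<in> set W" "grid_adj u v"
    with assms(3) have "grid_adj u v" "u \<noteq> (a + 1, b)" "v \<noteq> (a + 1, b)" by auto
    then show "((?Q u \<noteq> ?Q v) \<longleftrightarrow> crosses_left_of a b u v \<or> crosses_left_of (a + 1) b u v) \<and>
        \<not> (crosses_left_of a b u v \<and> crosses_left_of (a + 1) b u v)"
      by (cases rule: grid_adj_cases) (auto simp: crosses_left_of_def)
  qed
  moreover have "even (count_steps (\<lambda>u v. ?Q u \<noteq> ?Q v) W)"
    using even_count_steps_changes[OF assms(2), of ?Q] assms(4,5) by auto
  ultimately show ?thesis by auto
qed

definition crossings :: "(nat \<times> nat) list \<Rightarrow> nat \<times> nat \<Rightarrow> nat" where
  "crossings W x = count_steps (crosses_left_of (fst x) (snd x)) W"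

lemma even_crossings_grid_adj:
  assumes W: "successively grid_adj W" "W \<noteq> []" "fst (hd W) = 0" "fst (last W) = N + 1"
    and xy: "grid_adj x y" "x \<notin> set W" "y \<notin> set W" "fst x \<le> N" "fst y \<le> N"
  shows "even (crossings W x) \<longleftrightarrow> even (crossings W y)"
  using xy(1)
proof (cases rule: grid_adj_cases)
  case (1 a b) then show ?thesis
    using count_crossings_Suc_col[OF W(1), of a b] xy by (simp add: crossings_def)
next
  case (2 a b) then show ?thesis
    using count_crossings_Suc_col[OF W(1), of a b] xy by (simp add: crossings_def)
next
  case (3 a b) then show ?thesis
    using even_count_crossings_Suc_row[OF W(1,2), of a b] xy W(3,4) by (simp add: crossings_def)
next
  case (4 a b) then show ?thesis
    using even_count_crossings_Suc_row[OF W(1,2), of a b] xy W(3,4) by (simp add: crossings_def)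
qed

lemma even_crossings_walk:
  assumes W: "successively grid_adj W" "W \<noteq> []" "fst (hd W) = 0" "fst (last W) = N + 1"
  shows "successively grid_adj xs \<Longrightarrow> xs \<noteq> [] \<Longrightarrow> set xs \<inter> set W = {} \<Longrightarrow> \<forall>z\<in>set xs. fst z \<le> N
    \<Longrightarrow> even (crossings W (hd xs)) \<longleftrightarrow> even (crossings W (last xs))"
proof (induction xs rule: induct_list012)
  case (3 x y zs)
  then have "even (crossings W x) \<longleftrightarrow> even (crossings W y)"
    by (intro even_crossings_grid_adj[OF W]) auto
  with 3 show ?case by auto
qed auto

lemma grid_walks_intersect:
  assumes W: "successively grid_adj W" "W \<noteq> []" "fst (hd W) = 0" "fst (last W) = N + 1"
      "\<forall>z\<in>set W. 1 \<le> snd z \<and> snd z \<le> N"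
    and W': "successively grid_adj W'" "W' \<noteq> []" "hd W' = (i, 1)" "last W' = (i, N)"
      "\<forall>z\<in>set W'. fst z \<le> N" "i \<le> N"
  shows "set W \<inter> set W' \<noteq> {}"
proof
  assume disjoint: "set W \<inter> set W' = {}"
  have "crossings W (i, 1) = 0"
    unfolding crossings_def using W(1)
    by (rule count_steps_eq_0) (use W(5) in \<open>auto simp: crosses_left_of_def\<close>)
  then have even: "even (crossings W (i, N))"
    using even_crossings_walk[OF W(1-4) W'(1,2) _ W'(5)] W'(3,4) disjoint by auto
  have "(i, N) \<notin> set W"
    using W'(2,4) disjoint last_in_set by fastforce
  text \<open>Right of all of \<open>W\<close>, the ray meets every step of \<open>W\<close> between rows \<open>i\<close> and \<open>i + 1\<close>.\<close>
  have "crossings W (i, N) = count_steps (\<lambda>u v. (fst u \<le> i) \<noteq> (fst v \<le> i)) W"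
    unfolding crossings_def fst_conv snd_conv
  proof (rule count_steps_cong[OF W(1)])
    fix u v assume "u \<in> set W" "v \<in> set W" "grid_adj u v"
    with W(5) \<open>(i, N) \<notin> set W\<close>
    have "grid_adj u v" "u \<noteq> (i, N)" "v \<noteq> (i, N)" "snd u \<le> N" "snd v \<le> N"
      by auto
    then show "crosses_left_of i N u v \<longleftrightarrow> (fst u \<le> i) \<noteq> (fst v \<le> i)"
      by (cases rule: grid_adj_cases) (auto simp: crosses_left_of_def)
  qed
  then have "odd (crossings W (i, N))"
    using even_count_steps_changes[OF W(2), of "\<lambda>z. fst z \<le> i"] W(3,4) W'(6) by simp
  with even show False by simp
qed

definition branch_rel :: "('a \<Rightarrow> 'a \<Rightarrow> bool) \<Rightarrow> 'a set \<Rightarrow> ('a \<Rightarrow> 'b) \<Rightarrow> 'b \<Rightarrow> 'a rel" where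
  "branch_rel A D f h = Restr {(u, v). A u v} {x \<in> D. f x = h}"

text \<open>\<open>H\<close> arises from the graph \<open>A\<close> restricted to \<open>D\<close> by contracting the connected fibres of \<open>f\<close>
  and deleting edges.\<close>

definition branch_model ::
    "('a \<Rightarrow> 'a \<Rightarrow> bool) \<Rightarrow> 'a set \<Rightarrow> 'a set \<Rightarrow> 'a digraph \<Rightarrow> 'a set \<Rightarrow> ('a \<Rightarrow> 'a) \<Rightarrow> bool" where
  "branch_model A V K H D f \<longleftrightarrow> D \<subseteq> V \<and> K \<subseteq> D \<and> (\<forall>t\<in>K. f t = t) \<and> f ` D \<subseteq> fst H \<and>
     (\<forall>(a, b)\<in>snd H. \<exists>x\<in>D. \<exists>y\<in>D. A x y \<and> f x = a \<and> f y = b) \<and>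
     (\<forall>x\<in>D. \<forall>y\<in>D. f x = f y \<longrightarrow> (x, y) \<in> (branch_rel A D f (f x))\<^sup>*)"

definition has_branch_model :: "('a \<Rightarrow> 'a \<Rightarrow> bool) \<Rightarrow> 'a set \<Rightarrow> 'a set \<Rightarrow> 'a digraph \<Rightarrow> bool" where
  "has_branch_model A V K H \<longleftrightarrow>
     fst H \<subseteq> V \<and> snd H \<subseteq> fst H \<times> fst H \<and> (\<exists>D f. branch_model A V K H D f)"

lemma has_branch_model_self:
  assumes "K \<subseteq> V" "E \<subseteq> V \<times> V" "\<forall>(a, b)\<in>E. A a b"
  shows "has_branch_model A V K (V, E)"
proof -
  have "branch_model A V K (V, E) V id"
    using assms unfolding branch_model_def by auto
  with assms show ?thesis
    unfolding has_branch_model_def by auto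
qed

lemma branch_model_delete_vertex:
  assumes "branch_model A V K (VH, EH) D f" "x \<notin> K"
  shows "branch_model A V K (VH - {x}, {(a, b) \<in> EH. a \<noteq> x \<and> b \<noteq> x}) {y \<in> D. f y \<noteq> x} f"
proof -
  have "branch_rel A {y \<in> D. f y \<noteq> x} f h = branch_rel A D f h" if "h \<noteq> x" for h
    using that unfolding branch_rel_def by auto
  with assms show ?thesis
    unfolding branch_model_def by (auto 0 4)
qed

lemma rename_in_Diff: "a \<in> V \<Longrightarrow> z \<in> V \<Longrightarrow> w \<noteq> z \<Longrightarrow> rename w z a \<in> V - {w}"
  unfolding rename_def by auto

lemma branch_model_contract_connected:
  assumes M: "branch_model A V K (VH, EH) D f" and "symp A"
    and e: "(u, v) \<in> EH" "{w, z} = {u, v}" "w \<noteq> z"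
    and xy: "x \<in> D" "y \<in> D" "rename w z (f x) = rename w z (f y)"
  shows "(x, y) \<in> (branch_rel A D (rename w z \<circ> f) (rename w z (f x)))\<^sup>*"
    (is "_ \<in> (branch_rel A D ?g _)\<^sup>*")
proof -
  have branch_mono: "branch_rel A D f h \<subseteq> branch_rel A D ?g (rename w z h)" for h
    unfolding branch_rel_def by auto
  obtain x0 y0 where e0: "x0 \<in> D" "y0 \<in> D" "A x0 y0" "f x0 = u" "f y0 = v"
    using M e(1) unfolding branch_model_def by fastforce
  have uv: "u \<in> {w, z}" "v \<in> {w, z}"
    using e(2) by blast+
  have conn: "(x, y) \<in> (branch_rel A D f (f x))\<^sup>*" if "x \<in> D" "y \<in> D" "f x = f y" for x y
    using M that unfolding branch_model_def by blast
  text \<open>The merged branch set is connected through the lifted edge from \<open>x0\<close> to \<open>y0\<close>.\<close>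
  have to_x0: "(x, x0) \<in> (branch_rel A D ?g z)\<^sup>*" if x: "x \<in> D" "?g x = z" for x
  proof -
    have renamed: "rename w z (f x) = z"
      using x by simp
    have "f x = f x0 \<or> f x = f y0"
      using x e(2,3) e0(4,5) unfolding rename_def by (auto split: if_splits)
    then show ?thesis
    proof
      assume "f x = f x0"
      then show ?thesis
        using conn[OF x(1) e0(1)] rtrancl_mono[OF branch_mono[of "f x"]] renamed by auto
    next
      assume "f x = f y0"
      then have "(x, y0) \<in> (branch_rel A D ?g z)\<^sup>*"
        using conn[OF x(1) e0(2)] rtrancl_mono[OF branch_mono[of "f x"]] renamed by auto
      moreover have "(y0, x0) \<in> branch_rel A D ?g z"
        using e0 uv \<open>symp A\<close> unfolding branch_rel_def rename_def by (auto dest: sympD)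
      ultimately show ?thesis by simp
    qed
  qed
  show ?thesis
  proof (cases "?g x = z")
    case True
    have "sym (branch_rel A D ?g z)"
      using \<open>symp A\<close> unfolding branch_rel_def sym_def by (auto dest: sympD)
    moreover have "(y, x0) \<in> (branch_rel A D ?g z)\<^sup>*"
      using to_x0[of y] xy True by simp
    ultimately have "(x0, y) \<in> (branch_rel A D ?g z)\<^sup>*"
      by (metis sym_rtrancl symD)
    then show ?thesis
      using to_x0[of x] xy True by simp
  next
    case False
    then have "f x = f y" "rename w z (f x) = f x"
      using xy unfolding rename_def by (auto split: if_splits)
    then show ?thesis
      using conn[OF xy(1,2)] rtrancl_mono[OF branch_mono[of "f x"]] by auto
  qed
qed

lemma branch_model_contract:
  assumes M: "branch_model A V K (VH, EH) D f" and "symp A" "z \<in> VH"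
    and e: "(u, v) \<in> EH" "{w, z} = {u, v}" "w \<noteq> z" "w \<notin> K"
  shows "branch_model A V K (VH - {w},
      {(rename w z a, rename w z b) | a b. (a, b) \<in> EH \<and> rename w z a \<noteq> rename w z b})
      D (rename w z \<circ> f)"
    (is "branch_model A V K (_, ?EH') D ?g")
proof -
  have "\<exists>x\<in>D. \<exists>y\<in>D. A x y \<and> ?g x = a' \<and> ?g y = b'" if "(a', b') \<in> ?EH'" for a' b'
    using that M unfolding branch_model_def by fastforce
  moreover have "?g ` D \<subseteq> VH - {w}"
    using M rename_in_Diff[OF _ \<open>z \<in> VH\<close> e(3)] unfolding branch_model_def by auto
  moreover have "\<forall>t\<in>K. ?g t = t"
    using M e(4) unfolding branch_model_def rename_def by auto
  ultimately show ?thesis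
    using M branch_model_contract_connected[OF M \<open>symp A\<close> e(1-3)] unfolding branch_model_def by auto
qed

lemma has_branch_model_minor_step:
  assumes "minor_step K H H'" "has_branch_model A V K H" "symp A"
  shows "has_branch_model A V K H'"
proof -
  obtain D f where M: "branch_model A V K H D f" and sub: "fst H \<subseteq> V" "snd H \<subseteq> fst H \<times> fst H"
    using assms(2) unfolding has_branch_model_def by blast
  from assms(1) show ?thesis
  proof cases
    case (del_vertex x VH EH)
    then have "branch_model A V K H' {y \<in> D. f y \<noteq> x} f"
      using M branch_model_delete_vertex by simp
    with sub del_vertex show ?thesis
      unfolding has_branch_model_def by auto
  next
    case (del_edge e EH VH)
    then have "branch_model A V K H' D f"
      using M unfolding branch_model_def by auto
    with sub del_edge show ?thesis
      unfolding has_branch_model_def by auto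
  next
    case (contract u v EH w z VH)
    have "z \<in> {u, v}"
      using contract(6) by blast
    then have "z \<in> VH"
      using contract(1,3) sub by auto
    then have "branch_model A V K H' D (rename w z \<circ> f)"
      using contract M assms(3) branch_model_contract by simp
    moreover have "snd H' \<subseteq> fst H' \<times> fst H'"
      using contract(1,2) sub rename_in_Diff[OF _ \<open>z \<in> VH\<close> contract(7)] by auto
    ultimately show ?thesis
      using contract(1,2) sub unfolding has_branch_model_def by auto
  qed
qed

lemma has_branch_model_minor:
  "is_minor K G H \<Longrightarrow> has_branch_model A V K G \<Longrightarrow> symp A \<Longrightarrow> has_branch_model A V K H"
  unfolding is_minor_def
  by (induction rule: rtranclp_induct) (auto intro: has_branch_model_minor_step)

lemma walk_of_rtrancl_Restr:
  assumes "(s, t) \<in> (Restr {(u, v). A u v} X)\<^sup>*" "s \<in> X"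
  obtains W where "successively A W" "W \<noteq> []" "hd W = s" "last W = t" "set W \<subseteq> X"
proof -
  from assms have "\<exists>W. successively A W \<and> W \<noteq> [] \<and> hd W = s \<and> last W = t \<and> set W \<subseteq> X"
  proof (induction rule: rtrancl_induct)
    case base
    then show ?case by (intro exI[of _ "[s]"]) auto
  next
    case (step y z)
    then obtain W where "successively A W" "W \<noteq> []" "hd W = s" "last W = y" "set W \<subseteq> X"
      by blast
    with step(2) show ?case
      by (intro exI[of _ "W @ [z]"]) (auto simp: successively_append_iff)
  qed
  with that show ?thesis by blast
qed

lemma branch_model_reach_lift:
  assumes M: "branch_model A V K (VH, EH) D f" and "s \<in> K"
    and "(s, h) \<in> EH\<^sup>*" "(h, t) \<in> EH\<^sup>*" "x \<in> D" "f x = h"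
  shows "(s, x) \<in> (Restr {(u, v). A u v} {y \<in> D. (s, f y) \<in> EH\<^sup>* \<and> (f y, t) \<in> EH\<^sup>*})\<^sup>*"
    (is "_ \<in> ?R\<^sup>*")
proof -
  have branch_sub: "(branch_rel A D f h')\<^sup>* \<subseteq> ?R\<^sup>*" if "(s, h') \<in> EH\<^sup>*" "(h', t) \<in> EH\<^sup>*" for h'
    using that by (intro rtrancl_mono) (auto simp: branch_rel_def)
  have conn: "(x, y) \<in> (branch_rel A D f (f x))\<^sup>*" if "x \<in> D" "y \<in> D" "f x = f y" for x y
    using M that unfolding branch_model_def by blast
  from assms(3-6) show ?thesis
  proof (induction arbitrary: x rule: rtrancl_induct)
    case base
    have "s \<in> D" "f s = s"
      using M \<open>s \<in> K\<close> unfolding branch_model_def by auto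
    then have "(s, x) \<in> (branch_rel A D f s)\<^sup>*"
      using conn[of s x] base by auto
    then show ?case
      using branch_sub[OF _ base(1)] by auto
  next
    case (step h' h)
    obtain x' y where e: "x' \<in> D" "y \<in> D" "A x' y" "f x' = h'" "f y = h"
      using M step(2) unfolding branch_model_def by fastforce
    have h't: "(h', t) \<in> EH\<^sup>*"
      using step(2,4) by (rule converse_rtrancl_into_rtrancl)
    have sh: "(s, h) \<in> EH\<^sup>*"
      using step(1,2) by (rule rtrancl_into_rtrancl)
    have "(s, x') \<in> ?R\<^sup>*"
      using step.IH h't e(1,4) by blast
    moreover have "(x', y) \<in> ?R"
      using e step(1,4) h't sh by auto
    moreover have "(y, x) \<in> ?R\<^sup>*"
      using conn[of y x] e step(5,6) branch_sub[OF sh step(4)] by auto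
    ultimately show ?case
      by (meson rtrancl_into_rtrancl rtrancl_trans)
  qed
qed

lemma branch_model_path_lift:
  assumes M: "branch_model A V K (VH, EH) D f" and "s \<in> K" "t \<in> K" "(s, t) \<in> EH\<^sup>*"
  obtains W where "successively A W" "W \<noteq> []" "hd W = s" "last W = t"
    "set W \<subseteq> {x \<in> D. (s, f x) \<in> EH\<^sup>* \<and> (f x, t) \<in> EH\<^sup>*}"
proof -
  have "s \<in> D" "f s = s" "t \<in> D" "f t = t"
    using M assms(2,3) unfolding branch_model_def by auto
  then have "(s, t) \<in> (Restr {(u, v). A u v} {x \<in> D. (s, f x) \<in> EH\<^sup>* \<and> (f x, t) \<in> EH\<^sup>*})\<^sup>*"
    and "s \<in> {x \<in> D. (s, f x) \<in> EH\<^sup>* \<and> (f x, t) \<in> EH\<^sup>*}"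
    using branch_model_reach_lift[OF M assms(2,4)] assms(4) by auto
  then show ?thesis
    using that by (rule walk_of_rtrancl_Restr)
qed

lemma grid_K_iff:
  "x \<in> grid_K r \<longleftrightarrow> x \<in> grid_V r \<and> (fst x = 1 \<or> fst x = r + 2 \<or> snd x = 1 \<or> snd x = r + 2)"
  by (cases x) (simp add: grid_K_def)

lemma grid_V_bounds: "x \<in> grid_V r \<Longrightarrow> 1 \<le> fst x \<and> fst x \<le> r + 2 \<and> 1 \<le> snd x \<and> snd x \<le> r + 2"
  by (cases x) (simp add: grid_V_def)

lemma has_branch_model_grid: "has_branch_model grid_adj (grid_V r) (grid_K r) (grid r)"
  unfolding grid_def
  by (rule has_branch_model_self) (auto simp: grid_K_def grid_E_def grid_adj_def)

lemma finite_grid_V: "finite (grid_V r)"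
proof (rule finite_subset)
  show "grid_V r \<subseteq> {0..r + 2} \<times> {0..r + 2}"
    unfolding grid_V_def by auto
qed auto

lemma grid_boundary_terminals:
  assumes "j \<in> {2..r + 1}"
  shows "(1, j) \<in> grid_K r" "(r + 2, j) \<in> grid_K r" "(j, 1) \<in> grid_K r" "(j, r + 2) \<in> grid_K r"
  using assms unfolding grid_K_def grid_V_def by auto

lemma grid_reach_mono: "(x, y) \<in> (grid_E r)\<^sup>* \<Longrightarrow> fst x \<le> fst y \<and> snd x \<le> snd y"
  by (induction rule: rtrancl_induct) (auto simp: grid_E_def)

lemma acyclic_grid_E: "acyclic (grid_E r)"
proof -
  have "fst x + snd x < fst y + snd y" if "(x, y) \<in> (grid_E r)\<^sup>+" for x y
    using that by (induction rule: trancl_induct) (auto simp: grid_E_def)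
  then show ?thesis
    unfolding acyclic_def by fastforce
qed

lemma grid_column_reach:
  assumes "j \<in> {2..r + 1}"
  shows "((1, j), (r + 2, j)) \<in> (grid_E r)\<^sup>*"
proof -
  have "((1, j), (1 + n, j)) \<in> (grid_E r)\<^sup>*" if "n \<le> r + 1" for n
    using that
  proof (induction n)
    case (Suc n)
    then have "((1 + n, j), (1 + Suc n, j)) \<in> grid_E r"
      using assms unfolding grid_E_def grid_K_def grid_V_def by auto
    with Suc show ?case by (meson Suc_leD rtrancl_into_rtrancl)
  qed simp
  from this[of "r + 1"] show ?thesis by simp
qed

lemma grid_row_reach:
  assumes "i \<in> {2..r + 1}"
  shows "((i, 1), (i, r + 2)) \<in> (grid_E r)\<^sup>*"
proof -
  have "((i, 1), (i, 1 + n)) \<in> (grid_E r)\<^sup>*" if "n \<le> r + 1" for n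
    using that
  proof (induction n)
    case (Suc n)
    then have "((i, 1 + n), (i, 1 + Suc n)) \<in> grid_E r"
      using assms unfolding grid_E_def grid_K_def grid_V_def by auto
    with Suc show ?case by (meson Suc_leD rtrancl_into_rtrancl)
  qed simp
  from this[of "r + 1"] show ?thesis by simp
qed

lemma grid_terminal_no_in_edge:
  assumes "(x, y) \<in> grid_E r" "y \<in> grid_K r"
  shows "fst y \<noteq> 1 \<and> snd y \<noteq> 1"
proof -
  have "x \<in> grid_V r" "x \<notin> grid_K r"
    "(fst y = fst x \<and> snd y = snd x + 1) \<or> (snd y = snd x \<and> fst y = fst x + 1)"
    using assms unfolding grid_E_def by auto
  then show ?thesis
    using grid_V_bounds[of x r] unfolding grid_K_iff by auto
qed

lemma grid_terminal_no_out_edge: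
  assumes "(x, y) \<in> grid_E r" "x \<in> grid_K r"
  shows "fst x \<noteq> r + 2 \<and> snd x \<noteq> r + 2"
proof -
  have "y \<in> grid_V r" "y \<notin> grid_K r"
    "(fst y = fst x \<and> snd y = snd x + 1) \<or> (snd y = snd x \<and> fst y = fst x + 1)"
    using assms unfolding grid_E_def by auto
  then show ?thesis
    using grid_V_bounds[of y r] unfolding grid_K_iff by auto
qed

text \<open>Terminals on the top or left side are sources, those on the bottom or right side sinks.\<close>

lemma grid_terminal_not_crossing:
  assumes "v \<in> grid_K r" "i \<in> {2..r + 1}" "j \<in> {2..r + 1}"
    and "((1, j), v) \<in> (grid_E r)\<^sup>*" "(v, (r + 2, j)) \<in> (grid_E r)\<^sup>*"
    and "((i, 1), v) \<in> (grid_E r)\<^sup>*" "(v, (i, r + 2)) \<in> (grid_E r)\<^sup>*"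
  shows False
proof -
  have "fst v = 1 \<or> snd v = 1 \<or> fst v = r + 2 \<or> snd v = r + 2"
    using assms(1) unfolding grid_K_def by auto
  then consider "fst v = 1 \<or> snd v = 1" | "fst v = r + 2 \<or> snd v = r + 2"
    by blast
  then show False
  proof cases
    case 1
    then have "(1, j) = v" "(i, 1) = v"
      using assms(1,4,6) grid_terminal_no_in_edge by (metis rtranclE)+
    then show False using assms(2) by auto
  next
    case 2
    then have "v = (r + 2, j)" "v = (i, r + 2)"
      using assms(1,5,7) grid_terminal_no_out_edge by (metis converse_rtranclE)+
    then show False using assms(3) by auto
  qed
qed

lemma grid_column_row_walks_meet:
  assumes WA: "successively grid_adj WA" "WA \<noteq> []" "hd WA = (1, j)" "last WA = (r + 2, j)"
      "set WA \<subseteq> grid_V r"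
    and WB: "successively grid_adj WB" "WB \<noteq> []" "hd WB = (i, 1)" "last WB = (i, r + 2)"
      "set WB \<subseteq> grid_V r"
    and ij: "i \<in> {2..r + 1}" "j \<in> {2..r + 1}"
  shows "set WA \<inter> set WB \<noteq> {}"
proof -
  have "set ((0, j) # WA @ [(r + 3, j)]) \<inter> set WB \<noteq> {}"
  proof (rule grid_walks_intersect[OF _ _ _ _ _ WB(1-4)])
    show "successively grid_adj ((0, j) # WA @ [(r + 3, j)])"
      using WA(1-4) by (auto simp: successively_Cons successively_append_iff grid_adj_def)
    show "\<forall>z\<in>set ((0, j) # WA @ [(r + 3, j)]). 1 \<le> snd z \<and> snd z \<le> r + 2"
      using WA(5) grid_V_bounds ij(2) by fastforce
    show "\<forall>z\<in>set WB. fst z \<le> r + 2"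
      using WB(5) grid_V_bounds by fastforce
  qed (use ij(1) in auto)
  moreover have "(0, j) \<notin> set WB" "(r + 3, j) \<notin> set WB"
    using WB(5) grid_V_bounds by fastforce+
  ultimately show ?thesis
    by auto
qed

lemma grid_minor_has_branch_model:
  "is_minor (grid_K r) (grid r) H \<Longrightarrow> has_branch_model grid_adj (grid_V r) (grid_K r) H"
  using has_branch_model_minor has_branch_model_grid symp_grid_adj by blast

lemma grid_minor_reach_mono:
  assumes "reach_pres_minor (grid_K r) (grid r) H" "x \<in> grid_K r" "y \<in> grid_K r"
    and "(x, y) \<in> (snd H)\<^sup>*"
  shows "fst x \<le> fst y \<and> snd x \<le> snd y"
  using assms grid_reach_mono unfolding reach_pres_minor_def grid_def by auto

lemma grid_minor_crossing_vertex:
  assumes minor: "reach_pres_minor (grid_K r) (grid r) H" and ij: "i \<in> {2..r + 1}" "j \<in> {2..r + 1}"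
  obtains v where "v \<in> fst H - grid_K r"
    "((1, j), v) \<in> (snd H)\<^sup>*" "(v, (r + 2, j)) \<in> (snd H)\<^sup>*"
    "((i, 1), v) \<in> (snd H)\<^sup>*" "(v, (i, r + 2)) \<in> (snd H)\<^sup>*"
proof -
  obtain VH EH where H: "H = (VH, EH)" by fastforce
  have "has_branch_model grid_adj (grid_V r) (grid_K r) H"
    using minor grid_minor_has_branch_model unfolding reach_pres_minor_def by blast
  then obtain D f where M: "branch_model grid_adj (grid_V r) (grid_K r) (VH, EH) D f"
    unfolding has_branch_model_def H by auto
  have D: "D \<subseteq> grid_V r" "f ` D \<subseteq> VH"
    using M unfolding branch_model_def by auto
  have reach: "(x, x') \<in> EH\<^sup>* \<longleftrightarrow> (x, x') \<in> (grid_E r)\<^sup>*" if "x \<in> grid_K r" "x' \<in> grid_K r" for x x'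
    using minor that unfolding reach_pres_minor_def H grid_def by auto
  note terminals = grid_boundary_terminals[OF ij(2)] grid_boundary_terminals[OF ij(1)]
  obtain WA where WA: "successively grid_adj WA" "WA \<noteq> []" "hd WA = (1, j)" "last WA = (r + 2, j)"
      "set WA \<subseteq> {x \<in> D. ((1, j), f x) \<in> EH\<^sup>* \<and> (f x, (r + 2, j)) \<in> EH\<^sup>*}"
    using branch_model_path_lift[OF M terminals(1,2)] grid_column_reach[OF ij(2)] reach terminals
    by blast
  obtain WB where WB: "successively grid_adj WB" "WB \<noteq> []" "hd WB = (i, 1)" "last WB = (i, r + 2)"
      "set WB \<subseteq> {x \<in> D. ((i, 1), f x) \<in> EH\<^sup>* \<and> (f x, (i, r + 2)) \<in> EH\<^sup>*}"
    using branch_model_path_lift[OF M terminals(7,8)] grid_row_reach[OF ij(1)] reach terminals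
    by blast
  have "set WA \<inter> set WB \<noteq> {}"
    using grid_column_row_walks_meet[OF WA(1-4) _ WB(1-4)] WA(5) WB(5) D ij by blast
  then obtain x where x: "x \<in> set WA" "x \<in> set WB"
    by auto
  have v_reach: "((1, j), f x) \<in> EH\<^sup>*" "(f x, (r + 2, j)) \<in> EH\<^sup>*"
      "((i, 1), f x) \<in> EH\<^sup>*" "(f x, (i, r + 2)) \<in> EH\<^sup>*"
    using x WA(5) WB(5) by auto
  have "f x \<notin> grid_K r"
  proof
    assume v: "f x \<in> grid_K r"
    show False
      by (rule grid_terminal_not_crossing[OF v ij])
        (use v_reach reach[OF _ v] reach[OF v] terminals in auto)
  qed
  moreover have "f x \<in> fst H"
    using x WA(5) D(2) H by auto
  ultimately show ?thesis
    using that v_reach H by simp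
qed

lemma grid_minor_interior_injection:
  assumes minor: "reach_pres_minor (grid_K r) (grid r) H"
  obtains c where "inj_on c ({2..r + 1} \<times> {2..r + 1})"
    "c ` ({2..r + 1} \<times> {2..r + 1}) \<subseteq> fst H - grid_K r"
proof -
  define I where "I = {2..r + 1}"
  define crossing where "crossing i j v \<longleftrightarrow> v \<in> fst H - grid_K r \<and>
      ((1, j), v) \<in> (snd H)\<^sup>* \<and> (v, (r + 2, j)) \<in> (snd H)\<^sup>* \<and>
      ((i, 1), v) \<in> (snd H)\<^sup>* \<and> (v, (i, r + 2)) \<in> (snd H)\<^sup>*" for i j v
  define c where "c p = (SOME v. crossing (fst p) (snd p) v)" for p
  have c: "crossing i j (c (i, j))" if ij: "i \<in> I" "j \<in> I" for i j
  proof -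
    obtain v where "crossing i j v"
      using grid_minor_crossing_vertex[OF minor ij[unfolded I_def]] unfolding crossing_def by blast
    then show ?thesis
      unfolding c_def by (auto intro: someI)
  qed
  have "inj_on c (I \<times> I)"
  proof (rule inj_onI, clarify)
    fix i j i' j' assume ij: "i \<in> I" "j \<in> I" "i' \<in> I" "j' \<in> I" and "c (i, j) = c (i', j')"
    then have "crossing i j (c (i, j))" "crossing i' j' (c (i, j))"
      using c by metis+
    then have "((1, j), (r + 2, j')) \<in> (snd H)\<^sup>*" "((1, j'), (r + 2, j)) \<in> (snd H)\<^sup>*"
      "((i, 1), (i', r + 2)) \<in> (snd H)\<^sup>*" "((i', 1), (i, r + 2)) \<in> (snd H)\<^sup>*"
      unfolding crossing_def by (meson rtrancl_trans)+
    then show "i = i' \<and> j = j'"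
      using grid_minor_reach_mono[OF minor] grid_boundary_terminals ij
      unfolding I_def by (metis fst_conv snd_conv le_antisym)
  qed
  moreover have "c ` (I \<times> I) \<subseteq> fst H - grid_K r"
    using c unfolding crossing_def by auto
  ultimately show ?thesis
    using that unfolding I_def by blast
qed

theorem theorem1p3:
  fixes r :: nat
  assumes "r \<ge> 1"
  shows "acyclic (grid_E r) \<and>
    (\<forall>H :: (nat \<times> nat) digraph. reach_pres_minor (grid_K r) (grid r) H \<longrightarrow>
       card (fst H - grid_K r) \<ge> r ^ 2)"
proof (intro conjI allI impI)
  show "acyclic (grid_E r)"
    by (rule acyclic_grid_E)
next
  fix H :: "(nat \<times> nat) digraph"
  assume minor: "reach_pres_minor (grid_K r) (grid r) H"
  obtain c where c: "inj_on c ({2..r + 1} \<times> {2..r + 1})"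
    "c ` ({2..r + 1} \<times> {2..r + 1}) \<subseteq> fst H - grid_K r"
    using grid_minor_interior_injection[OF minor] by blast
  have "finite (fst H - grid_K r)"
    using minor grid_minor_has_branch_model finite_grid_V
    unfolding reach_pres_minor_def has_branch_model_def by (meson finite_Diff finite_subset)
  then have "card ({2..r + 1} \<times> {2..r + 1}) \<le> card (fst H - grid_K r)"
    using card_inj_on_le c by blast
  then show "r ^ 2 \<le> card (fst H - grid_K r)"
    by (simp add: card_cartesian_product power2_eq_square)
qed

end
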